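(* For all $n\geq 1$ and $m\geq 2$, $s_{n,m}(122,312)=(n-1)m+1$.
   Context: $[n]_m=\{1^m,\ldots,n^m\}$; a permutation of $[n]_m$ is a sequence of length $nm$ in which each element of $[n]$ appears exactly $m$ times. A sequence avoids a pattern $\pi$ if it has no subsequence order-isomorphic to $\pi$ (same relative order and same equalities among entries). $s_{n,m}(\Pi)$ is the number of permutations of $[n]_m$ avoiding all patterns in $\Pi$. *)

theory Defs
  imports Main
begin

definition multiperm :: "nat \<Rightarrow> nat \<Rightarrow> nat list \<Rightarrow> bool" where
  "multiperm n m w \<longleftrightarrow> length w = n * m \<and> set w \<subseteq> {1..n} \<and>
     (\<forall>i\<in>{1..n}. count_list w i = m)"

definition order_iso :: "nat list \<Rightarrow> nat list \<Rightarrow> bool" where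
  "order_iso u v \<longleftrightarrow> length u = length v \<and>
     (\<forall>i<length u. \<forall>j<length u. (u!i < u!j \<longleftrightarrow> v!i < v!j) \<and> (u!i = u!j \<longleftrightarrow> v!i = v!j))"

definition contains :: "nat list \<Rightarrow> nat list \<Rightarrow> bool" where
  "contains w p \<longleftrightarrow> (\<exists>f. strict_mono_on {..<length p} f \<and> (\<forall>i<length p. f i < length w) \<and>
     order_iso (map (\<lambda>i. w ! f i) [0..<length p]) p)"

definition avoids :: "nat list \<Rightarrow> nat list \<Rightarrow> bool" where
  "avoids w p \<longleftrightarrow> \<not> contains w p"

definition s_count :: "nat \<Rightarrow> nat \<Rightarrow> nat list set \<Rightarrow> nat" where
  "s_count n m Pi = card {w. multiperm n m w \<and> (\<forall>p\<in>Pi. avoids w p)}"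

end

theory Submission
  imports Defs "HOL-Library.Multiset"
begin

text \<open>Since every value occurs at least twice, avoiding 122 and 312 forces the larger
entry of every ascent to be the maximum \<open>n\<close>: an \<open>n\<close> before the ascent gives a 312,
two copies of \<open>n\<close> after its first entry give a 122.  Hence, after deleting the last
\<open>n\<close>, no ascent is left (its top would be an earlier \<open>n\<close>, completing a 122 with the
last one), so the rest is the weakly decreasing word \<open>n^(m-1) (n-1)^m \<dots> 1^m\<close>.  The
last \<open>n\<close> may be reinserted anywhere after the first \<open>m - 1\<close> letters, and conversely
each such word avoids both patterns: its only ascents end in that last \<open>n\<close>.\<close>

lemma contains_length3_iff:
  "contains w [a, b, c] \<longleftrightarrow>
     (\<exists>i j k. i < j \<and> j < k \<and> k < length w \<and> order_iso [w!i, w!j, w!k] [a, b, c])"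
proof
  assume "contains w [a, b, c]"
  then obtain f where f: "strict_mono_on {..<3} f" "\<forall>i<3. f i < length w"
    "order_iso (map (\<lambda>i. w ! f i) [0..<3]) [a, b, c]"
    unfolding contains_def by (auto simp: eval_nat_numeral)
  have "f 0 < f 1" "f 1 < f 2" using f(1) unfolding strict_mono_on_def by auto
  moreover have "map (\<lambda>i. w ! f i) [0..<3] = [w ! f 0, w ! f 1, w ! f 2]"
    by (simp add: upt_rec numeral_2_eq_2)
  ultimately show "\<exists>i j k. i < j \<and> j < k \<and> k < length w \<and> order_iso [w!i, w!j, w!k] [a, b, c]"
    using f(2,3) by (intro exI[of _ "f 0"] exI[of _ "f 1"] exI[of _ "f 2"]) auto
next
  assume "\<exists>i j k. i < j \<and> j < k \<and> k < length w \<and> order_iso [w!i, w!j, w!k] [a, b, c]"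
  then obtain i j k where ijk: "i < j" "j < k" "k < length w" "order_iso [w!i, w!j, w!k] [a, b, c]"
    by blast
  define f where "f x = (if x = 0 then i else if x = 1 then j else k)" for x :: nat
  have "strict_mono_on {..<3} f" "\<forall>x<3. f x < length w"
    using ijk unfolding strict_mono_on_def f_def by auto
  moreover have "map (\<lambda>x. w ! f x) [0..<3] = [w!i, w!j, w!k]" by (simp add: upt_rec f_def)
  moreover have "length [a, b, c] = 3" by simp
  ultimately show "contains w [a, b, c]" unfolding contains_def using ijk(4) by metis
qed

lemma avoids_122_iff:
  "avoids w [1, 2, 2] \<longleftrightarrow>
     \<not> (\<exists>i j k. i < j \<and> j < k \<and> k < length w \<and> w!i < w!j \<and> w!j = w!k)"
proof -
  have "order_iso [x, y, z] [1, 2, 2] \<longleftrightarrow> x < y \<and> y = z" for x y z :: nat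
    unfolding order_iso_def by (auto simp: less_Suc_eq numeral_eq_Suc)
  then show ?thesis unfolding avoids_def contains_length3_iff by blast
qed

lemma avoids_312_iff:
  "avoids w [3, 1, 2] \<longleftrightarrow>
     \<not> (\<exists>i j k. i < j \<and> j < k \<and> k < length w \<and> w!j < w!k \<and> w!k < w!i)"
proof -
  have "order_iso [x, y, z] [3, 1, 2] \<longleftrightarrow> y < z \<and> z < x" for x y z :: nat
    unfolding order_iso_def by (auto simp: less_Suc_eq numeral_eq_Suc)
  then show ?thesis unfolding avoids_def contains_length3_iff by blast
qed

lemma count_list_ge_2_obtain_positions:
  assumes "2 \<le> count_list xs a"
  obtains j k where "j < k" "k < length xs" "xs!j = a" "xs!k = a"
  using assms
proof (induction xs arbitrary: thesis)
  case Nil then show ?case by simp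
next
  case (Cons x xs)
  show ?case
  proof (cases "x = a")
    case True
    then have "a \<in> set xs" using Cons.prems(2) count_list_0_iff[of xs a] by simp
    then obtain t where "t < length xs" "xs!t = a" by (metis in_set_conv_nth)
    then show ?thesis using True by (intro Cons.prems(1)[of 0 "Suc t"]) auto
  next
    case False
    with Cons.prems(2) have "2 \<le> count_list xs a" by simp
    then obtain j k where "j < k" "k < length xs" "xs!j = a" "xs!k = a" using Cons.IH by blast
    then show ?thesis by (intro Cons.prems(1)[of "Suc j" "Suc k"]) auto
  qed
qed

lemma sorted_desc_eqI:
  fixes xs ys :: "'a::linorder list"
  assumes "sorted_wrt (\<ge>) xs" "sorted_wrt (\<ge>) ys" "\<And>x. count_list xs x = count_list ys x"
  shows "xs = ys"
proof -
  have "sorted (rev xs)" "sorted (rev ys)" using assms(1,2) by (simp_all add: sorted_wrt_rev)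
  moreover have "mset (rev xs) = mset (rev ys)" using assms(3) by (simp add: multiset_eq_iff count_mset)
  ultimately have "sort (rev ys) = rev xs" by (intro properties_for_sort)
  then show ?thesis using \<open>sorted (rev ys)\<close> by (simp add: sorted_sort_id)
qed

lemma nth_delete_eq_nth_insert:
  assumes "t < length (xs @ x # ys)" "t \<noteq> length xs"
  shows "(xs @ x # ys) ! t = (xs @ ys) ! (if t < length xs then t else t - 1)"
  using assms by (cases "t < length xs") (auto simp: nth_append nth_Cons')

lemma ascent_of_insert_into_desc:
  fixes xs ys :: "'a::linorder list"
  assumes sorted: "sorted_wrt (\<ge>) (xs @ ys)" and ij: "i < j" "j < length (xs @ x # ys)"
    and ascent: "(xs @ x # ys) ! i < (xs @ x # ys) ! j"
  shows "i = length xs \<or> j = length xs"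
proof (rule ccontr)
  assume "\<not> (i = length xs \<or> j = length xs)"
  define del where "del t = (if t < length xs then t else t - 1)" for t
  have "del i \<le> del j" "del j < length (xs @ ys)"
    using ij \<open>\<not> _\<close> unfolding del_def by auto
  moreover have "(xs @ ys) ! del i < (xs @ ys) ! del j"
    using ascent ij \<open>\<not> _\<close> nth_delete_eq_nth_insert[of i xs x ys] nth_delete_eq_nth_insert[of j xs x ys]
    unfolding del_def by simp
  ultimately show False
    using sorted_wrt_nth_less[OF sorted, of "del i" "del j"] by (cases "del i = del j") auto
qed

fun desc_word :: "nat \<Rightarrow> nat \<Rightarrow> nat list" where
  "desc_word m 0 = []"
| "desc_word m (Suc k) = replicate m (Suc k) @ desc_word m k"

lemma length_desc_word: "length (desc_word m k) = k * m"
  by (induction k) auto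

lemma set_desc_word: "set (desc_word m k) \<subseteq> {1..k}"
  by (induction k) auto

lemma count_list_replicate: "count_list (replicate l a) x = (if x = a then l else 0)"
  by (induction l) auto

lemma count_list_desc_word: "count_list (desc_word m k) x = (if 1 \<le> x \<and> x \<le> k then m else 0)"
  by (induction k) (auto simp: count_list_replicate)

lemma sorted_replicate_desc: "sorted_wrt (\<ge>) (replicate l (a::'a::preorder))"
  by (induction l) auto

lemma sorted_desc_word: "sorted_wrt (\<ge>) (desc_word m k)"
  by (induction k) (auto simp: sorted_wrt_append sorted_replicate_desc dest: set_desc_word[THEN subsetD])

lemma sorted_replicate_append_desc_word:
  assumes "k \<le> n"
  shows "sorted_wrt (\<ge>) (replicate l n @ desc_word m k)"
  using assms sorted_desc_word[of m k] set_desc_word[of m k]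
  by (force simp: sorted_wrt_append sorted_replicate_desc)

definition avoider :: "nat \<Rightarrow> nat \<Rightarrow> nat \<Rightarrow> nat list" where
  "avoider n m k = replicate (m - 1) n @ take k (desc_word m (n - 1)) @ n # drop k (desc_word m (n - 1))"

lemma count_list_multiperm:
  assumes "multiperm n m w"
  shows "count_list w x = (if 1 \<le> x \<and> x \<le> n then m else 0)"
  using assms unfolding multiperm_def by (auto intro!: count_notin)

lemma ascent_top_eq_max:
  assumes w: "multiperm n m w" "avoids w [1, 2, 2]" "avoids w [3, 1, 2]" and "m \<ge> 2"
    and ij: "i < j" "j < length w" "w!i < w!j"
  shows "w!j = n"
proof (rule ccontr)
  assume "w!j \<noteq> n"
  moreover have "w!j \<in> {1..n}" using w(1) nth_mem[OF ij(2)] unfolding multiperm_def by blast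
  ultimately have "w!j < n" "1 \<le> n" by auto
  then have "2 \<le> count_list w n" using count_list_multiperm[OF w(1), of n] \<open>m \<ge> 2\<close> by simp
  then obtain p q where pq: "p < q" "q < length w" "w!p = n" "w!q = n"
    by (rule count_list_ge_2_obtain_positions)
  have "p \<noteq> i" using pq(3) ij(3) \<open>w!j < n\<close> by auto
  then consider "p < i" | "i < p" by linarith
  then show False
  proof cases
    case 1
    with ij pq \<open>w!j < n\<close> have "p < i" "j < length w" "w!i < w!j" "w!j < w!p" by auto
    with w(3) ij(1) show False unfolding avoids_312_iff by blast
  next
    case 2
    with ij pq \<open>w!j < n\<close> have "i < p" "w!i < w!p" "w!p = w!q" by auto
    with w(2) pq(1,2) show False unfolding avoids_122_iff by blast
  qed
qed

lemma sorted_after_deleting_last_max: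
  assumes w: "multiperm n m w" "avoids w [1, 2, 2]" "avoids w [3, 1, 2]" and "m \<ge> 2"
    and split: "w = xs @ n # ys" "n \<notin> set ys"
  shows "sorted_wrt (\<ge>) (xs @ ys)"
  unfolding sorted_wrt_iff_nth_less
proof (intro allI impI, rule ccontr)
  fix i j assume ij: "i < j" "j < length (xs @ ys)" and "\<not> (xs @ ys) ! j \<le> (xs @ ys) ! i"
  define lift where "lift t = (if t < length xs then t else Suc t)" for t
  have lift: "w ! lift t = (xs @ ys) ! t" if "t < length (xs @ ys)" for t
    using nth_delete_eq_nth_insert[of "lift t" xs n ys] that unfolding split lift_def by auto
  have "lift i < lift j" "lift j < length w" using ij unfolding lift_def split by auto
  moreover have "w ! lift i < w ! lift j"
    using lift ij \<open>\<not> (xs @ ys) ! j \<le> (xs @ ys) ! i\<close> by auto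
  ultimately have top: "w ! lift j = n" using ascent_top_eq_max[OF w \<open>m \<ge> 2\<close>] by blast
  have "j < length xs"
  proof (rule ccontr)
    assume "\<not> j < length xs"
    then have "w ! lift j \<in> set ys" using ij unfolding lift_def split by (auto simp: nth_append)
    then show False using top split(2) by simp
  qed
  then have "i < j" "j < length xs" "length xs < length w" "w!i < w!j" "w!j = w ! length xs"
    using ij lift top \<open>w ! lift i < w ! lift j\<close> unfolding lift_def split by (auto simp: nth_append)
  then show False using w(2) unfolding avoids_122_iff by blast
qed

lemma avoider_if_avoids:
  assumes w: "multiperm n m w" "avoids w [1, 2, 2]" "avoids w [3, 1, 2]" and "m \<ge> 2" "n \<ge> 1"
  shows "\<exists>k \<le> (n - 1) * m. w = avoider n m k"
proof -
  define R where "R = replicate (m - 1) n"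
  define D where "D = desc_word m (n - 1)"
  have "n \<in> set w" using count_list_multiperm[OF w(1), of n] count_list_0_iff[of w n] assms(4,5)
    by simp
  then obtain xs ys where split: "w = xs @ n # ys" "n \<notin> set ys" using split_list_last by metis
  have "sorted_wrt (\<ge>) (R @ D)"
    unfolding R_def D_def by (simp add: sorted_replicate_append_desc_word)
  moreover have "count_list (xs @ ys) x = count_list (R @ D) x" for x
    using count_list_multiperm[OF w(1), of x] assms(4,5)
    unfolding split R_def D_def by (auto simp: count_list_replicate count_list_desc_word split: if_splits)
  ultimately have v: "xs @ ys = R @ D"
    by (rule sorted_desc_eqI[OF sorted_after_deleting_last_max[OF assms(1-4) split]])
  have xs_eq: "take (length xs) (R @ D) = xs" and ys_eq: "drop (length xs) (R @ D) = ys"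
    using v by (metis append_eq_conv_conj)+
  have "m - 1 \<le> length xs"
  proof (rule ccontr)
    assume short: "\<not> m - 1 \<le> length xs"
    then have "xs = replicate (length xs) n" using xs_eq unfolding R_def by simp
    from arg_cong[OF this, of "\<lambda>u. count_list u n"]
    have "count_list xs n = length xs" by (simp add: count_list_replicate)
    moreover have "count_list xs n = m - 1"
      using count_list_multiperm[OF w(1), of n] assms(5) split by simp
    ultimately show False using short by simp
  qed
  define k where "k = length xs - (m - 1)"
  have "xs = R @ take k D" "ys = drop k D"
    using xs_eq ys_eq \<open>m - 1 \<le> length xs\<close> unfolding k_def R_def by simp_all
  then have "w = avoider n m k" unfolding avoider_def split R_def D_def by simp
  moreover have "k \<le> (n - 1) * m"
    using arg_cong[OF v, of length] length_desc_word[of m "n - 1"] unfolding k_def R_def D_def by simp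
  ultimately show ?thesis by blast
qed

lemma multiperm_avoider:
  assumes "m \<ge> 1" "n \<ge> 1"
  shows "multiperm n m (avoider n m k)"
  unfolding multiperm_def
proof (intro conjI ballI)
  define D where "D = desc_word m (n - 1)"
  have "count_list (take k D) x + count_list (drop k D) x = count_list D x" for x
    by (metis count_list_append append_take_drop_id)
  then have count: "count_list (avoider n m k) x = count_list (replicate (m - 1) n @ n # D) x" for x
    unfolding avoider_def D_def[symmetric] by simp
  have "length (avoider n m k) = m - 1 + 1 + (n - 1) * m"
    unfolding avoider_def by (simp add: length_desc_word)
  then show "length (avoider n m k) = n * m" using assms by (cases n) simp_all
  show "set (avoider n m k) \<subseteq> {1..n}"
    using set_desc_word[of m "n - 1"] assms(2) unfolding avoider_def
    by (fastforce dest: in_set_takeD in_set_dropD)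
  fix x assume "x \<in> {1..n}"
  then show "count_list (avoider n m k) x = m"
    using assms(1) unfolding count by (auto simp: count_list_replicate count_list_desc_word D_def)
qed

lemma avoids_avoider:
  fixes n m k :: nat
  defines "w \<equiv> avoider n m k"
  shows "avoids w [1, 2, 2]" "avoids w [3, 1, 2]"
proof -
  define D where "D = desc_word m (n - 1)"
  define xs where "xs = replicate (m - 1) n @ take k D"
  define ys where "ys = drop k D"
  have split: "w = xs @ n # ys" unfolding w_def avoider_def xs_def ys_def D_def by simp
  have "set D \<subseteq> {1..n - 1}" unfolding D_def by (rule set_desc_word)
  then have "n \<notin> set ys" unfolding ys_def by (fastforce dest: in_set_dropD)
  have "\<forall>x \<in> set w. x \<le> n"
    using \<open>set D \<subseteq> _\<close> unfolding split xs_def ys_def by (fastforce dest: in_set_takeD in_set_dropD)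
  then have le_n: "w!t \<le> n" if "t < length w" for t using nth_mem[OF that] by blast
  have "sorted_wrt (\<ge>) (xs @ ys)"
    unfolding xs_def ys_def D_def by (simp add: sorted_replicate_append_desc_word)
  then have ascent: "j = length xs" if "i < j" "j < length w" "w!i < w!j" for i j
    using ascent_of_insert_into_desc[of xs ys i j n] le_n[of j] that unfolding split
    by (auto simp: nth_append)
  show "avoids w [1, 2, 2]" unfolding avoids_122_iff
  proof
    assume "\<exists>i j l. i < j \<and> j < l \<and> l < length w \<and> w!i < w!j \<and> w!j = w!l"
    then obtain i j l where ijl: "i < j" "j < l" "l < length w" "w!i < w!j" "w!j = w!l" by blast
    then have "j = length xs" using ascent by simp
    then have "w!l \<in> set ys" "w!l = n" using ijl unfolding split by (auto simp: nth_append)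
    then show False using \<open>n \<notin> set ys\<close> by simp
  qed
  show "avoids w [3, 1, 2]" unfolding avoids_312_iff
  proof
    assume "\<exists>i j l. i < j \<and> j < l \<and> l < length w \<and> w!j < w!l \<and> w!l < w!i"
    then obtain i j l where ijl: "i < j" "j < l" "l < length w" "w!j < w!l" "w!l < w!i" by blast
    then have "l = length xs" using ascent by blast
    then have "w!l = n" unfolding split by simp
    moreover have "w!i \<le> n" using ijl by (intro le_n) linarith
    ultimately show False using ijl(5) by simp
  qed
qed

text \<open>The letters after the last \<open>n\<close> recover \<open>k\<close>.\<close>

lemma inj_on_avoider: "inj_on (avoider n m) {0..(n - 1) * m}"
proof (rule inj_onI)
  fix k k' assume "k \<in> {0..(n - 1) * m}" "k' \<in> {0..(n - 1) * m}" "avoider n m k = avoider n m k'"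
  define D where "D = desc_word m (n - 1)"
  have "n \<notin> set D" using set_desc_word[of m "n - 1"] unfolding D_def by fastforce
  have suffix: "takeWhile (\<lambda>y. y \<noteq> n) (rev (avoider n m l)) = rev (drop l D)" for l
    using \<open>n \<notin> set D\<close> unfolding avoider_def D_def[symmetric]
    by (auto simp: takeWhile_tail takeWhile_eq_all_conv dest: in_set_dropD)
  from suffix[of k] suffix[of k'] \<open>avoider n m k = avoider n m k'\<close>
  have "length D - k = length D - k'" by (metis length_drop length_rev)
  moreover have "length D = (n - 1) * m" unfolding D_def by (rule length_desc_word)
  ultimately show "k = k'" using \<open>k \<in> _\<close> \<open>k' \<in> _\<close> by auto
qed

theorem theorem7:
  fixes n m :: nat
  assumes "n \<ge> 1" and "m \<ge> 2"
  shows "s_count n m {[1,2,2],[3,1,2]} = (n - 1) * m + 1"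
proof -
  have "{w. multiperm n m w \<and> (\<forall>p\<in>{[1,2,2],[3,1,2]}. avoids w p)} = avoider n m ` {0..(n - 1) * m}"
    (is "?A = ?B")
  proof
    show "?A \<subseteq> ?B"
    proof
      fix w assume "w \<in> ?A"
      then have "multiperm n m w" "avoids w [1, 2, 2]" "avoids w [3, 1, 2]" by auto
      from avoider_if_avoids[OF this assms(2,1)] show "w \<in> ?B" by auto
    qed
    show "?B \<subseteq> ?A" using multiperm_avoider avoids_avoider assms by auto
  qed
  then have "s_count n m {[1,2,2],[3,1,2]} = card (avoider n m ` {0..(n - 1) * m})"
    unfolding s_count_def by simp
  also have "\<dots> = (n - 1) * m + 1" using card_image[OF inj_on_avoider] assms by simp
  finally show ?thesis .
qed

end
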